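(* Fix $\nu>0$. In the setting of the context (one equality constraint, no inequality constraints), let $(\bar\mu,\bar\tau,\bar\sigma_f,\bar\sigma_h)$ be a critical point of the augmented canonical dual function $P^d_\nu$ in the interior of its domain. Then $\bar\tau=0$, $(\bar\mu,\bar\sigma_f,\bar\sigma_h)$ is a critical point of $P^d$, and $$P^d_\nu(\bar\mu,0,\bar\sigma_f,\bar\sigma_h)=P^d(\bar\mu,\bar\sigma_f,\bar\sigma_h).$$
   Context: Problem: minimize $f(x)$ over $x\in\mathbb{R}^n$ subject to a single equality constraint $h(x)=0$, where $f(x)=V_f(\Lambda_f(x))+\tfrac12x^TAx-c^Tx$ ($A$ symmetric, $c\in\mathbb{R}^n$) and $h(x)=V_h(\Lambda_h(x))\in\mathbb{R}$. Here $\Lambda_f:\mathbb{R}^n\to\mathbb{R}^{k_f}$, $\Lambda_h:\mathbb{R}^n\to\mathbb{R}^{l}$ are quadratic maps (components polynomials of degree at most 2), and $V_f,V_h$ are "canonical functions": each $V$ is differentiable on an open set $E$ containing the image of its $\Lambda$, $\nabla V:E\to E^*$ is a bijection onto an open set $E^*$, and the Legendre conjugate $V^*(\sigma)=\sigma^T\xi-V(\xi)$, $\xi=(\nabla V)^{-1}(\sigma)$, is differentiable on $E^*$ with $\nabla V^*=(\nabla V)^{-1}$. Augmented Lagrangian: $\mathcal L_\nu(x,\mu)=f(x)+\mu h(x)+\frac{1}{2\nu}h(x)^2$. Its total complementarity function, for $\mu,\tau\in\mathbb{R}$, $\sigma_f\in E_f^*$, $\sigma_h\in E_h^*$: $$\Xi_1^\nu(x,\mu,\tau,\sigma_f,\sigma_h)=\Lambda_f(x)^T\sigma_f-V_f^*(\sigma_f)+(\mu+\tau)\big[\Lambda_h(x)^T\sigma_h-V_h^*(\sigma_h)\big]-\tfrac{\nu}{2}\tau^2+\tfrac12x^TAx-c^Tx.$$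 This is quadratic in $x$; $P^d_\nu(\mu,\tau,\sigma_f,\sigma_h)$ is defined, on the open set where the $x$-Hessian $\nabla_x^2\Xi_1^\nu$ is nonsingular, as the value of $\Xi_1^\nu(\cdot,\mu,\tau,\sigma_f,\sigma_h)$ at its unique stationary point in $x$. Similarly, with $\Xi_1(x,\mu,\sigma_f,\sigma_h)=\Lambda_f(x)^T\sigma_f-V_f^*(\sigma_f)+\mu[\Lambda_h(x)^T\sigma_h-V_h^*(\sigma_h)]+\tfrac12x^TAx-c^Tx$, the (non-augmented) canonical dual function $P^d(\mu,\sigma_f,\sigma_h)$ is defined, where $\nabla_x^2\Xi_1$ is nonsingular, as the value of $\Xi_1(\cdot,\mu,\sigma_f,\sigma_h)$ at its unique stationary point in $x$. *)

theory Defs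
  imports "HOL-Analysis.Analysis"
begin

definition quadratic_map :: "(real^'n \<Rightarrow> real^'k) \<Rightarrow> bool" where
  "quadratic_map \<Lambda> \<longleftrightarrow>
     (\<exists>(Q :: 'k \<Rightarrow> real^'n^'n) (b :: 'k \<Rightarrow> real^'n) (c0 :: real^'k).
        \<forall>x. \<Lambda> x = (\<chi> i. x \<bullet> (Q i *v x) + b i \<bullet> x + c0 $ i))"

definition legendre_conj ::
  "('a::euclidean_space \<Rightarrow> real) \<Rightarrow> 'a set \<Rightarrow> ('a \<Rightarrow> 'a) \<Rightarrow> 'a \<Rightarrow> real" where
  "legendre_conj V E DV \<sigma> = \<sigma> \<bullet> inv_into E DV \<sigma> - V (inv_into E DV \<sigma>)"

definition canonical ::
  "('a::euclidean_space \<Rightarrow> real) \<Rightarrow> ('a \<Rightarrow> 'a) \<Rightarrow> 'a set \<Rightarrow> 'a set \<Rightarrow> bool" where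
  "canonical V DV E Es \<longleftrightarrow>
     open E \<and> open Es \<and>
     (\<forall>\<xi>\<in>E. (V has_derivative (\<lambda>h. DV \<xi> \<bullet> h)) (at \<xi>)) \<and>
     bij_betw DV E Es \<and>
     (\<forall>\<sigma>\<in>Es. (legendre_conj V E DV has_derivative (\<lambda>h. inv_into E DV \<sigma> \<bullet> h)) (at \<sigma>))"

definition hessian :: "(real^'n \<Rightarrow> real) \<Rightarrow> real^'n \<Rightarrow> real^'n^'n" where
  "hessian g x = (\<chi> i j. frechet_derivative
       (\<lambda>y. frechet_derivative g (at y) (axis j 1)) (at x) (axis i 1))"

definition stat_value :: "(real^'n \<Rightarrow> real) \<Rightarrow> real" where
  "stat_value g = g (THE x. (g has_derivative (\<lambda>h. 0)) (at x))"

definition Xi1_nu ::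
  "(real^'n \<Rightarrow> real^'k) \<Rightarrow> (real^'k \<Rightarrow> real) \<Rightarrow> (real^'n \<Rightarrow> real^'l) \<Rightarrow> (real^'l \<Rightarrow> real)
   \<Rightarrow> real^'n^'n \<Rightarrow> real^'n \<Rightarrow> real \<Rightarrow> real^'n \<Rightarrow> real \<Rightarrow> real \<Rightarrow> real^'k \<Rightarrow> real^'l \<Rightarrow> real" where
  "Xi1_nu \<Lambda>f Vfs \<Lambda>h Vhs A c \<nu> x \<mu> \<tau> \<sigma>f \<sigma>h =
     \<Lambda>f x \<bullet> \<sigma>f - Vfs \<sigma>f + (\<mu> + \<tau>) * (\<Lambda>h x \<bullet> \<sigma>h - Vhs \<sigma>h) - \<nu> / 2 * \<tau>^2
     + 1/2 * (x \<bullet> (A *v x)) - c \<bullet> x"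

definition Xi1 ::
  "(real^'n \<Rightarrow> real^'k) \<Rightarrow> (real^'k \<Rightarrow> real) \<Rightarrow> (real^'n \<Rightarrow> real^'l) \<Rightarrow> (real^'l \<Rightarrow> real)
   \<Rightarrow> real^'n^'n \<Rightarrow> real^'n \<Rightarrow> real^'n \<Rightarrow> real \<Rightarrow> real^'k \<Rightarrow> real^'l \<Rightarrow> real" where
  "Xi1 \<Lambda>f Vfs \<Lambda>h Vhs A c x \<mu> \<sigma>f \<sigma>h =
     \<Lambda>f x \<bullet> \<sigma>f - Vfs \<sigma>f + \<mu> * (\<Lambda>h x \<bullet> \<sigma>h - Vhs \<sigma>h)
     + 1/2 * (x \<bullet> (A *v x)) - c \<bullet> x"

definition dom_Pd_nu ::
  "(real^'n \<Rightarrow> real^'k) \<Rightarrow> (real^'k \<Rightarrow> real) \<Rightarrow> (real^'k) set \<Rightarrow> (real^'n \<Rightarrow> real^'l) \<Rightarrow> (real^'l \<Rightarrow> real)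
   \<Rightarrow> (real^'l) set \<Rightarrow> real^'n^'n \<Rightarrow> real^'n \<Rightarrow> real \<Rightarrow> (real \<times> real \<times> (real^'k) \<times> (real^'l)) set" where
  "dom_Pd_nu \<Lambda>f Vfs Efs \<Lambda>h Vhs Ehs A c \<nu> =
     {(\<mu>, \<tau>, \<sigma>f, \<sigma>h). \<sigma>f \<in> Efs \<and> \<sigma>h \<in> Ehs \<and>
        (\<forall>x. invertible (hessian (\<lambda>y. Xi1_nu \<Lambda>f Vfs \<Lambda>h Vhs A c \<nu> y \<mu> \<tau> \<sigma>f \<sigma>h) x))}"

definition Pd_nu ::
  "(real^'n \<Rightarrow> real^'k) \<Rightarrow> (real^'k \<Rightarrow> real) \<Rightarrow> (real^'n \<Rightarrow> real^'l) \<Rightarrow> (real^'l \<Rightarrow> real)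
   \<Rightarrow> real^'n^'n \<Rightarrow> real^'n \<Rightarrow> real \<Rightarrow> real \<times> real \<times> (real^'k) \<times> (real^'l) \<Rightarrow> real" where
  "Pd_nu \<Lambda>f Vfs \<Lambda>h Vhs A c \<nu> = (\<lambda>(\<mu>, \<tau>, \<sigma>f, \<sigma>h).
     stat_value (\<lambda>x. Xi1_nu \<Lambda>f Vfs \<Lambda>h Vhs A c \<nu> x \<mu> \<tau> \<sigma>f \<sigma>h))"

definition dom_Pd ::
  "(real^'n \<Rightarrow> real^'k) \<Rightarrow> (real^'k \<Rightarrow> real) \<Rightarrow> (real^'k) set \<Rightarrow> (real^'n \<Rightarrow> real^'l) \<Rightarrow> (real^'l \<Rightarrow> real)
   \<Rightarrow> (real^'l) set \<Rightarrow> real^'n^'n \<Rightarrow> real^'n \<Rightarrow> (real \<times> (real^'k) \<times> (real^'l)) set" where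
  "dom_Pd \<Lambda>f Vfs Efs \<Lambda>h Vhs Ehs A c =
     {(\<mu>, \<sigma>f, \<sigma>h). \<sigma>f \<in> Efs \<and> \<sigma>h \<in> Ehs \<and>
        (\<forall>x. invertible (hessian (\<lambda>y. Xi1 \<Lambda>f Vfs \<Lambda>h Vhs A c y \<mu> \<sigma>f \<sigma>h) x))}"

definition Pd ::
  "(real^'n \<Rightarrow> real^'k) \<Rightarrow> (real^'k \<Rightarrow> real) \<Rightarrow> (real^'n \<Rightarrow> real^'l) \<Rightarrow> (real^'l \<Rightarrow> real)
   \<Rightarrow> real^'n^'n \<Rightarrow> real^'n \<Rightarrow> real \<times> (real^'k) \<times> (real^'l) \<Rightarrow> real" where
  "Pd \<Lambda>f Vfs \<Lambda>h Vhs A c = (\<lambda>(\<mu>, \<sigma>f, \<sigma>h).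
     stat_value (\<lambda>x. Xi1 \<Lambda>f Vfs \<Lambda>h Vhs A c x \<mu> \<sigma>f \<sigma>h))"

end

theory Submission
  imports Defs
begin

text \<open>\<open>\<Xi>\<^sub>1\<^sup>\<nu>\<close> at \<open>(\<mu>, \<tau>)\<close> is \<open>\<Xi>\<^sub>1\<close> at \<open>\<mu> + \<tau>\<close> minus a constant in \<open>x\<close>, so
  \<open>P\<^sup>d\<^sub>\<nu>(\<mu>, \<tau>, \<sigma>) = P\<^sup>d(\<mu> + \<tau>, \<sigma>) - \<nu>\<tau>\<^sup>2/2\<close> and the domains correspond likewise.
  Along the direction \<open>(-1, 1, 0, 0)\<close> the first summand is constant, so criticality forces
  \<open>\<nu>\<tau> = 0\<close>; on the slice \<open>\<tau> = 0\<close> the two dual functions coincide.\<close>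

lemma has_derivative_add_const_iff:
  fixes g :: "'a::real_normed_vector \<Rightarrow> 'b::real_normed_vector"
  shows "((\<lambda>x. g x + k) has_derivative g') F \<longleftrightarrow> (g has_derivative g') F"
proof
  assume "((\<lambda>x. g x + k) has_derivative g') F"
  from has_derivative_add_const[OF this, of "-k"] show "(g has_derivative g') F" by simp
qed (rule has_derivative_add_const)

lemma stat_value_add_const: "stat_value (\<lambda>x. g x + k) = stat_value g + k"
  unfolding stat_value_def has_derivative_add_const_iff ..

lemma hessian_add_const: "hessian (\<lambda>x. g x + k) = hessian g"
  unfolding hessian_def frechet_derivative_def has_derivative_add_const_iff ..

lemma Xi1_nu_eq_Xi1:
  "Xi1_nu \<Lambda>f Vfs \<Lambda>h Vhs A c \<nu> x \<mu> \<tau> \<sigma>f \<sigma>h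
     = Xi1 \<Lambda>f Vfs \<Lambda>h Vhs A c x (\<mu> + \<tau>) \<sigma>f \<sigma>h + - (\<nu> / 2 * \<tau>^2)"
  unfolding Xi1_nu_def Xi1_def by (simp add: algebra_simps)

lemma Pd_nu_eq_Pd:
  "Pd_nu \<Lambda>f Vfs \<Lambda>h Vhs A c \<nu> (\<mu>, \<tau>, \<sigma>f, \<sigma>h)
     = Pd \<Lambda>f Vfs \<Lambda>h Vhs A c (\<mu> + \<tau>, \<sigma>f, \<sigma>h) - \<nu> / 2 * \<tau>^2"
  unfolding Pd_nu_def Pd_def Xi1_nu_eq_Xi1 stat_value_add_const by simp

lemma dom_Pd_nu_eq_vimage:
  "dom_Pd_nu \<Lambda>f Vfs Efs \<Lambda>h Vhs Ehs A c \<nu>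
     = (\<lambda>(\<mu>, \<tau>, \<sigma>). (\<mu> + \<tau>, \<sigma>)) -` dom_Pd \<Lambda>f Vfs Efs \<Lambda>h Vhs Ehs A c"
  unfolding dom_Pd_nu_def dom_Pd_def Xi1_nu_eq_Xi1 hessian_add_const by auto

lemma critical_point_of_shifted_penalty:
  fixes P :: "real \<times> 'a::real_normed_vector \<Rightarrow> real"
  assumes "((\<lambda>(\<mu>, \<tau>, \<sigma>). P (\<mu> + \<tau>, \<sigma>) - \<nu> / 2 * \<tau>^2) has_derivative (\<lambda>_. 0))
             (at (\<mu>, \<tau>, \<sigma>))"
  shows "\<nu> * \<tau> = 0"
proof -
  let ?F = "\<lambda>(\<mu>, \<tau>, \<sigma>). P (\<mu> + \<tau>, \<sigma>) - \<nu> / 2 * \<tau>^2"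
  define \<gamma> where "\<gamma> t = (\<mu> - t, \<tau> + t, \<sigma>)" for t :: real
  have d\<gamma>: "(\<gamma> has_derivative (\<lambda>t. (-t, t, 0))) (at 0)"
    unfolding \<gamma>_def by (auto intro!: derivative_eq_intros simp: zero_prod_def)
  have "\<gamma> 0 = (\<mu>, \<tau>, \<sigma>)" by (simp add: \<gamma>_def)
  with assms have "(?F has_derivative (\<lambda>_. 0)) (at (\<gamma> 0))" by simp
  from diff_chain_at[OF d\<gamma> this] have zero: "((?F \<circ> \<gamma>) has_derivative (\<lambda>_. 0)) (at 0)"
    by (simp add: o_def[of "\<lambda>_. 0"])
  have "?F \<circ> \<gamma> = (\<lambda>t. P (\<mu> + \<tau>, \<sigma>) - \<nu> / 2 * (\<tau> + t)^2)"
    by (auto simp: \<gamma>_def)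
  moreover have "((\<lambda>t. P (\<mu> + \<tau>, \<sigma>) - \<nu> / 2 * (\<tau> + t)^2) has_derivative (\<lambda>h. - (\<nu> * \<tau>) * h)) (at 0)"
    by (auto intro!: derivative_eq_intros simp: algebra_simps)
  ultimately have "((?F \<circ> \<gamma>) has_derivative (\<lambda>h. - (\<nu> * \<tau>) * h)) (at 0)" by simp
  from has_derivative_unique[OF zero this] show ?thesis by (metis mult_cancel_left1 neg_equal_0_iff_equal)
qed

lemma has_derivative_zero_slice:
  fixes F :: "real \<times> real \<times> 'a::real_normed_vector \<Rightarrow> 'b::real_normed_vector"
  assumes "(F has_derivative (\<lambda>_. 0)) (at (\<mu>, 0, \<sigma>))"
  shows "((\<lambda>(\<mu>, \<sigma>). F (\<mu>, 0, \<sigma>)) has_derivative (\<lambda>_. 0)) (at (\<mu>, \<sigma>))"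
proof -
  define j where "j = (\<lambda>(\<mu>::real, \<sigma>::'a). (\<mu>, 0::real, \<sigma>))"
  have "(j has_derivative j) (at (\<mu>, \<sigma>))"
    unfolding j_def by (auto intro!: derivative_eq_intros simp: case_prod_beta')
  from diff_chain_at[OF this] assms show ?thesis
    by (simp add: j_def comp_def case_prod_beta')
qed

lemma interior_slice:
  fixes S :: "(real \<times> real \<times> 'a::topological_space) set"
  assumes "(\<mu>, 0, \<sigma>) \<in> interior S"
  shows "(\<mu>, \<sigma>) \<in> interior {(\<mu>, \<sigma>). (\<mu>, 0, \<sigma>) \<in> S}"
proof -
  define j where "j = (\<lambda>(\<mu>::real, \<sigma>::'a). (\<mu>, 0::real, \<sigma>))"
  have "continuous_on UNIV j"
    unfolding j_def by (auto intro!: continuous_intros simp: case_prod_beta')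
  then have "open (j -` interior S)" by (auto intro: open_vimage)
  moreover have "j -` interior S \<subseteq> {(\<mu>, \<sigma>). (\<mu>, 0, \<sigma>) \<in> S}"
    using interior_subset by (auto simp: j_def)
  ultimately have "j -` interior S \<subseteq> interior {(\<mu>, \<sigma>). (\<mu>, 0, \<sigma>) \<in> S}"
    by (rule interior_maximal[rotated])
  moreover have "(\<mu>, \<sigma>) \<in> j -` interior S" using assms by (simp add: j_def)
  ultimately show ?thesis by blast
qed

theorem theorem3:
  fixes \<Lambda>f :: "real^'n \<Rightarrow> real^'k" and \<Lambda>h :: "real^'n \<Rightarrow> real^'l"
    and Vf :: "real^'k \<Rightarrow> real" and DVf :: "real^'k \<Rightarrow> real^'k" and Ef Efs :: "(real^'k) set"
    and Vh :: "real^'l \<Rightarrow> real" and DVh :: "real^'l \<Rightarrow> real^'l" and Eh Ehs :: "(real^'l) set"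
    and A :: "real^'n^'n" and c :: "real^'n" and \<nu> :: real
    and \<mu> \<tau> :: real and \<sigma>f :: "real^'k" and \<sigma>h :: "real^'l"
  defines "Vfs \<equiv> legendre_conj Vf Ef DVf" and "Vhs \<equiv> legendre_conj Vh Eh DVh"
  assumes "\<nu> > 0"
    and "quadratic_map \<Lambda>f" and "quadratic_map \<Lambda>h"
    and "canonical Vf DVf Ef Efs" and "range \<Lambda>f \<subseteq> Ef"
    and "canonical Vh DVh Eh Ehs" and "range \<Lambda>h \<subseteq> Eh"
    and "transpose A = A"
    and "(\<mu>, \<tau>, \<sigma>f, \<sigma>h) \<in> interior (dom_Pd_nu \<Lambda>f Vfs Efs \<Lambda>h Vhs Ehs A c \<nu>)"
    and "(Pd_nu \<Lambda>f Vfs \<Lambda>h Vhs A c \<nu> has_derivative (\<lambda>_. 0)) (at (\<mu>, \<tau>, \<sigma>f, \<sigma>h))"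
  shows "\<tau> = 0
    \<and> (\<mu>, \<sigma>f, \<sigma>h) \<in> interior (dom_Pd \<Lambda>f Vfs Efs \<Lambda>h Vhs Ehs A c)
    \<and> (Pd \<Lambda>f Vfs \<Lambda>h Vhs A c has_derivative (\<lambda>_. 0)) (at (\<mu>, \<sigma>f, \<sigma>h))
    \<and> Pd_nu \<Lambda>f Vfs \<Lambda>h Vhs A c \<nu> (\<mu>, 0, \<sigma>f, \<sigma>h) = Pd \<Lambda>f Vfs \<Lambda>h Vhs A c (\<mu>, \<sigma>f, \<sigma>h)"
proof -
  let ?F = "Pd_nu \<Lambda>f Vfs \<Lambda>h Vhs A c \<nu>"
  let ?P = "Pd \<Lambda>f Vfs \<Lambda>h Vhs A c"
  have F_eq: "?F = (\<lambda>(\<mu>, \<tau>, \<sigma>). ?P (\<mu> + \<tau>, \<sigma>) - \<nu> / 2 * \<tau>^2)"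
    by (auto simp: Pd_nu_eq_Pd)
  have "\<nu> * \<tau> = 0"
    using critical_point_of_shifted_penalty assms(12) unfolding F_eq by blast
  with \<open>\<nu> > 0\<close> have \<tau>: "\<tau> = 0" by simp
  have P_eq: "?P = (\<lambda>(\<mu>, \<sigma>). ?F (\<mu>, 0, \<sigma>))"
    by (auto simp: Pd_nu_eq_Pd)
  have "(?P has_derivative (\<lambda>_. 0)) (at (\<mu>, \<sigma>f, \<sigma>h))"
    unfolding P_eq using has_derivative_zero_slice assms(12) \<tau> by blast
  moreover have "{(\<mu>, \<sigma>). (\<mu>, 0, \<sigma>) \<in> dom_Pd_nu \<Lambda>f Vfs Efs \<Lambda>h Vhs Ehs A c \<nu>}
      = dom_Pd \<Lambda>f Vfs Efs \<Lambda>h Vhs Ehs A c"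
    by (auto simp: dom_Pd_nu_eq_vimage)
  with interior_slice assms(11) \<tau>
  have "(\<mu>, \<sigma>f, \<sigma>h) \<in> interior (dom_Pd \<Lambda>f Vfs Efs \<Lambda>h Vhs Ehs A c)" by metis
  ultimately show ?thesis using \<tau> by (simp add: Pd_nu_eq_Pd)
qed

end
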